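(* For every finite hypergraph $\mathcal{H}=(X,\mathcal{E})$ with no isolated vertices and no empty hyperedge, $\tau_{\rm gr}(\mathcal{H})=\rho_{\rm gr}(\mathcal{H})$.
   Context: A vertex of a hypergraph is isolated if it lies in no hyperedge. A sequence $(C_1,\ldots,C_r)$ of distinct hyperedges is a legal hyperedge sequence if $C_i\setminus\bigcup_{j<i}C_j\neq\emptyset$ for all $i\in\{2,\ldots,r\}$; it is an edge covering sequence if moreover $C_1\cup\cdots\cup C_r=X$. The Grundy covering number $\rho_{\rm gr}(\mathcal{H})$ is the maximum length of an edge covering sequence. A legal transversal sequence is a sequence $(v_1,\ldots,v_t)$ of distinct vertices of $X$ such that for each $i$ there is a hyperedge $E_i\in\mathcal{E}$ with $v_i\in E_i$ and $v_j\notin E_i$ for all $j<i$, and such that every hyperedge of $\mathcal{E}$ contains some $v_i$. The Grundy transversal number $\tau_{\rm gr}(\mathcal{H})$ is the maximum length of a legal transversal sequence. *)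

theory Defs
  imports Main
begin

definition hypergraph :: "'a set \<Rightarrow> 'a set set \<Rightarrow> bool" where
  "hypergraph X E \<longleftrightarrow> (\<forall>e\<in>E. e \<subseteq> X)"

definition isolated_vertex :: "'a set \<Rightarrow> 'a set set \<Rightarrow> 'a \<Rightarrow> bool" where
  "isolated_vertex X E v \<longleftrightarrow> v \<in> X \<and> (\<forall>e\<in>E. v \<notin> e)"

definition legal_edge_seq :: "'a set set \<Rightarrow> 'a set list \<Rightarrow> bool" where
  "legal_edge_seq E Cs \<longleftrightarrow> distinct Cs \<and> set Cs \<subseteq> E \<and>
     (\<forall>i. 1 \<le> i \<and> i < length Cs \<longrightarrow> Cs ! i - \<Union>(set (take i Cs)) \<noteq> {})"

definition edge_covering_seq :: "'a set \<Rightarrow> 'a set set \<Rightarrow> 'a set list \<Rightarrow> bool" where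
  "edge_covering_seq X E Cs \<longleftrightarrow> legal_edge_seq E Cs \<and> \<Union>(set Cs) = X"

definition grundy_covering_number :: "'a set \<Rightarrow> 'a set set \<Rightarrow> nat" where
  "grundy_covering_number X E = Max {length Cs | Cs. edge_covering_seq X E Cs}"

definition legal_transversal_seq :: "'a set \<Rightarrow> 'a set set \<Rightarrow> 'a list \<Rightarrow> bool" where
  "legal_transversal_seq X E vs \<longleftrightarrow> distinct vs \<and> set vs \<subseteq> X \<and>
     (\<forall>i < length vs. \<exists>e\<in>E. vs ! i \<in> e \<and> (\<forall>j < i. vs ! j \<notin> e)) \<and>
     (\<forall>e\<in>E. \<exists>v\<in>set vs. v \<in> e)"

definition grundy_transversal_number :: "'a set \<Rightarrow> 'a set set \<Rightarrow> nat" where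
  "grundy_transversal_number X E = Max {length vs | vs. legal_transversal_seq X E vs}"

end

theory Submission
  imports Defs
begin

text \<open>Both Grundy numbers count the same combinatorial object: distinct vertices v_1, ..., v_r
  and hyperedges C_1, ..., C_r with v_i \<in> C_i and v_j \<notin> C_i for j < i, a triangular incidence
  pattern. Read with the vertices in order it is a legal transversal sequence with witnesses
  C_i; read with the hyperedges in reverse order it is a legal hyperedge sequence, v_i being
  the new vertex of C_i. So a sequence of either kind yields one of the other kind of the same
  length, and since both kinds extend greedily until they cover (no hyperedge is empty, no
  vertex is isolated), the maximal lengths agree.\<close>

definition legal_vertex_seq :: "'a set \<Rightarrow> 'a set set \<Rightarrow> 'a list \<Rightarrow> bool" where
  "legal_vertex_seq X E vs \<longleftrightarrow> distinct vs \<and> set vs \<subseteq> X \<and>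
     (\<forall>i < length vs. \<exists>e\<in>E. vs ! i \<in> e \<and> (\<forall>j < i. vs ! j \<notin> e))"

lemma legal_transversal_seq_iff:
  "legal_transversal_seq X E vs \<longleftrightarrow> legal_vertex_seq X E vs \<and> (\<forall>e\<in>E. set vs \<inter> e \<noteq> {})"
  unfolding legal_transversal_seq_def legal_vertex_seq_def by blast

definition triangular_incidence :: "'a list \<Rightarrow> 'a set list \<Rightarrow> bool" where
  "triangular_incidence vs Cs \<longleftrightarrow> length vs = length Cs \<and>
     (\<forall>i < length vs. vs ! i \<in> Cs ! i \<and> (\<forall>j < i. vs ! j \<notin> Cs ! i))"

lemma set_take_conv_nth: "i \<le> length xs \<Longrightarrow> set (take i xs) = {xs ! j | j. j < i}"
  by (auto simp: set_conv_nth) (metis nth_take)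

lemma triangular_incidence_distinct:
  assumes "triangular_incidence vs Cs"
  shows "distinct vs" and "distinct Cs"
proof -
  have neq: "vs ! j \<noteq> vs ! i \<and> Cs ! j \<noteq> Cs ! i" if "j < i" "i < length vs" for i j
    using assms that unfolding triangular_incidence_def by (metis order.strict_trans)
  show "distinct vs"
    unfolding distinct_conv_nth by (metis neq linorder_neqE_nat)
  show "distinct Cs"
    using assms unfolding distinct_conv_nth triangular_incidence_def by (metis neq linorder_neqE_nat)
qed

lemma triangular_incidence_rev_iff:
  "triangular_incidence (rev us) (rev Cs) \<longleftrightarrow> length us = length Cs \<and>
     (\<forall>i < length us. us ! i \<in> Cs ! i \<and> (\<forall>j < i. us ! i \<notin> Cs ! j))"
  (is "?lhs \<longleftrightarrow> ?rhs")
proof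
  assume ?lhs
  show ?rhs
  proof (intro conjI allI impI)
    show len: "length us = length Cs"
      using \<open>?lhs\<close> by (simp add: triangular_incidence_def)
    fix i assume i: "i < length us"
    have "rev us ! (length us - Suc i) \<in> rev Cs ! (length us - Suc i)"
      using \<open>?lhs\<close> i by (simp add: triangular_incidence_def)
    then show "us ! i \<in> Cs ! i"
      using i len by (simp add: rev_nth)
    fix j assume "j < i"
    then have "length us - Suc i < length us - Suc j" "length us - Suc j < length us"
      using i by arith+
    then have "rev us ! (length us - Suc i) \<notin> rev Cs ! (length us - Suc j)"
      using \<open>?lhs\<close> by (simp add: triangular_incidence_def)
    then show "us ! i \<notin> Cs ! j"
      using i len \<open>j < i\<close> by (simp add: rev_nth)
  qed
next
  assume ?rhs
  then show ?lhs
    unfolding triangular_incidence_def by (auto simp: rev_nth)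
qed

lemma legal_vertex_seq_iff_triangular_incidence:
  "legal_vertex_seq X E vs \<longleftrightarrow>
     set vs \<subseteq> X \<and> (\<exists>Cs. set Cs \<subseteq> E \<and> triangular_incidence vs Cs)"
proof
  assume legal: "legal_vertex_seq X E vs"
  then obtain w where w: "\<And>i. i < length vs \<Longrightarrow> w i \<in> E \<and> vs ! i \<in> w i \<and> (\<forall>j < i. vs ! j \<notin> w i)"
    unfolding legal_vertex_seq_def by metis
  have "set (map w [0..<length vs]) \<subseteq> E" and "triangular_incidence vs (map w [0..<length vs])"
    using w by (auto simp: triangular_incidence_def)
  then show "set vs \<subseteq> X \<and> (\<exists>Cs. set Cs \<subseteq> E \<and> triangular_incidence vs Cs)"
    using legal unfolding legal_vertex_seq_def by blast
next
  assume "set vs \<subseteq> X \<and> (\<exists>Cs. set Cs \<subseteq> E \<and> triangular_incidence vs Cs)"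
  then obtain Cs where X: "set vs \<subseteq> X" and E: "set Cs \<subseteq> E" and tri: "triangular_incidence vs Cs"
    by blast
  have "Cs ! i \<in> E \<and> vs ! i \<in> Cs ! i \<and> (\<forall>j < i. vs ! j \<notin> Cs ! i)" if "i < length vs" for i
    using E tri that nth_mem unfolding triangular_incidence_def by (metis subsetD)
  then show "legal_vertex_seq X E vs"
    unfolding legal_vertex_seq_def using X triangular_incidence_distinct(1)[OF tri] by blast
qed

lemma legal_edge_seq_if_triangular_incidence:
  assumes "set Cs \<subseteq> E" and tri: "triangular_incidence (rev us) (rev Cs)"
  shows "legal_edge_seq E Cs"
proof -
  have "distinct Cs"
    using triangular_incidence_distinct(2)[OF tri] by simp
  moreover have "us ! i \<in> Cs ! i - \<Union>(set (take i Cs))" if "i < length Cs" for i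
    using tri that by (auto simp: triangular_incidence_rev_iff set_take_conv_nth)
  ultimately show ?thesis
    unfolding legal_edge_seq_def using assms(1) by blast
qed

lemma legal_edge_seq_imp_triangular_incidence:
  assumes legal: "legal_edge_seq E Cs" and "{} \<notin> E"
  shows "\<exists>us. set us \<subseteq> \<Union>(set Cs) \<and> triangular_incidence (rev us) (rev Cs)"
proof -
  have "Cs ! i - \<Union>(set (take i Cs)) \<noteq> {}" if "i < length Cs" for i
  proof (cases "i = 0")
    case True
    have "Cs ! i \<in> E"
      using legal that nth_mem unfolding legal_edge_seq_def by blast
    then show ?thesis
      using True assms(2) by auto
  next
    case False
    then show ?thesis
      using legal that unfolding legal_edge_seq_def by simp
  qed
  then have "\<forall>i. \<exists>u. i < length Cs \<longrightarrow> u \<in> Cs ! i - \<Union>(set (take i Cs))"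
    by blast
  then obtain u where u: "\<And>i. i < length Cs \<Longrightarrow> u i \<in> Cs ! i - \<Union>(set (take i Cs))"
    by metis
  let ?us = "map u [0..<length Cs]"
  have "set ?us \<subseteq> \<Union>(set Cs)"
    using u by auto (metis nth_mem)
  moreover have "triangular_incidence (rev ?us) (rev Cs)"
    using u by (auto simp: triangular_incidence_rev_iff set_take_conv_nth)
  ultimately show ?thesis
    by blast
qed

lemma legal_vertex_seq_snoc:
  assumes "legal_vertex_seq X E vs" and "v \<in> X" and "e \<in> E" "v \<in> e" "set vs \<inter> e = {}"
  shows "legal_vertex_seq X E (vs @ [v])"
  unfolding legal_vertex_seq_def
proof (intro conjI allI impI)
  show "distinct (vs @ [v])" "set (vs @ [v]) \<subseteq> X"
    using assms unfolding legal_vertex_seq_def by auto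
  fix i assume "i < length (vs @ [v])"
  then consider "i < length vs" | "i = length vs"
    by fastforce
  then show "\<exists>e\<in>E. (vs @ [v]) ! i \<in> e \<and> (\<forall>j < i. (vs @ [v]) ! j \<notin> e)"
  proof cases
    case 1
    then show ?thesis
      using assms(1) unfolding legal_vertex_seq_def by (auto simp: nth_append)
  next
    case 2
    have "vs ! j \<notin> e" if "j < length vs" for j
      using assms(5) that nth_mem by blast
    then show ?thesis
      using 2 assms(3,4) by (auto simp: nth_append)
  qed
qed

lemma legal_edge_seq_snoc:
  assumes "legal_edge_seq E Cs" and "C \<in> E" "\<not> C \<subseteq> \<Union>(set Cs)"
  shows "legal_edge_seq E (Cs @ [C])"
  using assms unfolding legal_edge_seq_def by (auto simp: nth_append less_Suc_eq)

lemma legal_vertex_seq_extends_to_transversal: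
  assumes "hypergraph X E" "finite X" "{} \<notin> E" and "legal_vertex_seq X E vs"
  shows "\<exists>ws. legal_transversal_seq X E (vs @ ws)"
  using assms(4)
proof (induction "card (X - set vs)" arbitrary: vs rule: less_induct)
  case less
  show ?case
  proof (cases "\<forall>e\<in>E. set vs \<inter> e \<noteq> {}")
    case True
    then show ?thesis
      using less.prems legal_transversal_seq_iff by (metis append_Nil2)
  next
    case False
    then obtain e where e: "e \<in> E" "set vs \<inter> e = {}"
      by blast
    moreover obtain v where "v \<in> e"
      using e(1) assms(3) by (metis ex_in_conv)
    moreover have "v \<in> X"
      using assms(1) e(1) \<open>v \<in> e\<close> unfolding hypergraph_def by blast
    ultimately have "legal_vertex_seq X E (vs @ [v])"
      using less.prems legal_vertex_seq_snoc by metis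
    moreover have "card (X - set (vs @ [v])) < card (X - set vs)"
      using assms(2) \<open>v \<in> X\<close> \<open>v \<in> e\<close> e(2) by (intro psubset_card_mono) auto
    ultimately show ?thesis
      using less.hyps by (metis append.assoc)
  qed
qed

lemma legal_edge_seq_extends_to_covering:
  assumes "hypergraph X E" "finite X" "\<forall>v\<in>X. \<not> isolated_vertex X E v"
    and "legal_edge_seq E Cs"
  shows "\<exists>Ds. edge_covering_seq X E (Cs @ Ds)"
  using assms(4)
proof (induction "card (X - \<Union>(set Cs))" arbitrary: Cs rule: less_induct)
  case less
  have "\<Union>(set Cs) \<subseteq> X"
    using less.prems assms(1) unfolding legal_edge_seq_def hypergraph_def by blast
  show ?case
  proof (cases "\<Union>(set Cs) = X")
    case True
    then show ?thesis
      using less.prems unfolding edge_covering_seq_def by (metis append_Nil2)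
  next
    case False
    then obtain x where x: "x \<in> X" "x \<notin> \<Union>(set Cs)"
      using \<open>\<Union>(set Cs) \<subseteq> X\<close> by blast
    then obtain e where e: "e \<in> E" "x \<in> e"
      using assms(3) unfolding isolated_vertex_def by blast
    then have "legal_edge_seq E (Cs @ [e])"
      using less.prems x(2) legal_edge_seq_snoc by blast
    moreover have "card (X - \<Union>(set (Cs @ [e]))) < card (X - \<Union>(set Cs))"
      using assms(2) x e by (intro psubset_card_mono) auto
    ultimately show ?thesis
      using less.hyps by (metis append.assoc)
  qed
qed

lemma transversal_seq_imp_longer_covering_seq:
  assumes "hypergraph X E" "finite X" "\<forall>v\<in>X. \<not> isolated_vertex X E v"
    and "legal_transversal_seq X E vs"
  shows "\<exists>Cs. edge_covering_seq X E Cs \<and> length vs \<le> length Cs"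
proof -
  obtain Cs where "set Cs \<subseteq> E" "triangular_incidence vs Cs"
    using assms(4) legal_transversal_seq_iff legal_vertex_seq_iff_triangular_incidence by metis
  then have "legal_edge_seq E (rev Cs)" and len: "length (rev Cs) = length vs"
    using legal_edge_seq_if_triangular_incidence[of "rev Cs" E "rev vs"]
    by (simp_all add: triangular_incidence_def)
  then obtain Ds where "edge_covering_seq X E (rev Cs @ Ds)"
    using legal_edge_seq_extends_to_covering[OF assms(1-3)] by blast
  then show ?thesis
    using len by (intro exI[of _ "rev Cs @ Ds"]) simp
qed

lemma covering_seq_imp_longer_transversal_seq:
  assumes "hypergraph X E" "finite X" "{} \<notin> E" and "edge_covering_seq X E Cs"
  shows "\<exists>vs. legal_transversal_seq X E vs \<and> length Cs \<le> length vs"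
proof -
  obtain us where "set us \<subseteq> X" and tri: "triangular_incidence (rev us) (rev Cs)"
    using assms(3,4) legal_edge_seq_imp_triangular_incidence
    unfolding edge_covering_seq_def by metis
  moreover have "set (rev Cs) \<subseteq> E"
    using assms(4) unfolding edge_covering_seq_def legal_edge_seq_def by simp
  ultimately have "legal_vertex_seq X E (rev us)"
    unfolding legal_vertex_seq_iff_triangular_incidence by (metis set_rev)
  then obtain ws where "legal_transversal_seq X E (rev us @ ws)"
    using legal_vertex_seq_extends_to_transversal[OF assms(1-3)] by blast
  moreover have "length (rev us) = length Cs"
    using tri by (simp add: triangular_incidence_def)
  ultimately show ?thesis
    by (intro exI[of _ "rev us @ ws"]) simp
qed

lemma Max_eq_if_cofinal:
  fixes A B :: "'b::linorder set"
  assumes "finite A" "finite B" "A \<noteq> {}"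
    and "\<forall>a\<in>A. \<exists>b\<in>B. a \<le> b" "\<forall>b\<in>B. \<exists>a\<in>A. b \<le> a"
  shows "Max A = Max B"
proof -
  have "B \<noteq> {}"
    using assms(3,4) by blast
  have "Max A \<le> Max B"
    using assms(4) Max_in[OF assms(1,3)] Max_ge[OF assms(2)] by (meson order_trans)
  moreover have "Max B \<le> Max A"
    using assms(5) Max_in[OF assms(2) \<open>B \<noteq> {}\<close>] Max_ge[OF assms(1)] by (meson order_trans)
  ultimately show ?thesis
    by (rule antisym)
qed

theorem mainTheorem18:
  fixes X :: "'a set" and E :: "'a set set"
  assumes "hypergraph X E"
    and "finite X"
    and "\<forall>v\<in>X. \<not> isolated_vertex X E v"
    and "{} \<notin> E"
  shows "grundy_transversal_number X E = grundy_covering_number X E"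
proof -
  let ?T = "{length vs | vs. legal_transversal_seq X E vs}"
  let ?C = "{length Cs | Cs. edge_covering_seq X E Cs}"
  have "?T \<subseteq> length ` {vs. set vs \<subseteq> X \<and> distinct vs}"
    by (auto simp: legal_transversal_seq_def)
  then have "finite ?T"
    by (rule finite_subset) (simp add: finite_subset_distinct assms(2))
  have "E \<subseteq> Pow X"
    using assms(1) unfolding hypergraph_def by blast
  then have "?C \<subseteq> length ` {Cs. set Cs \<subseteq> Pow X \<and> distinct Cs}"
    by (auto simp: edge_covering_seq_def legal_edge_seq_def)
  then have "finite ?C"
    by (rule finite_subset) (simp add: finite_subset_distinct assms(2))
  have "legal_vertex_seq X E []"
    by (simp add: legal_vertex_seq_def)
  then have "?T \<noteq> {}"
    using legal_vertex_seq_extends_to_transversal[OF assms(1,2,4)] by fastforce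
  moreover have "\<forall>a\<in>?T. \<exists>b\<in>?C. a \<le> b"
    using transversal_seq_imp_longer_covering_seq[OF assms(1-3)] by blast
  moreover have "\<forall>b\<in>?C. \<exists>a\<in>?T. b \<le> a"
    using covering_seq_imp_longer_transversal_seq[OF assms(1,2,4)] by blast
  ultimately show ?thesis
    unfolding grundy_transversal_number_def grundy_covering_number_def
    using Max_eq_if_cofinal \<open>finite ?T\<close> \<open>finite ?C\<close> by blast
qed

end
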